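(* Let $f:\mathbb{R}^n\times\mathbb{R}_+\to\mathbb{R}$ be thrice continuously differentiable with $\nabla_{\mathbf{x}\mathbf{x}} f(\mathbf{x},t)\succeq m\mathbf{I}_n$ for some $m>0$ and all $(\mathbf{x},t)$, and suppose that for all $\mathbf{x},t$ and $i\in\{1,\dots,n\}$: $\|\nabla_{\mathbf{x}\mathbf{x}} f\|_2\le C_{xx}$, $\|\nabla_{\mathbf{x}t} f\|_2\le C_{xt}$, $\|\nabla_{\mathbf{x}\mathbf{x}t} f\|_2\le C_{xxt}$, $\|\nabla_{\mathbf{x}tt} f\|_2\le C_{xtt}$, $\|\nabla_{\mathbf{x}\mathbf{x}\mathbf{x}_i} f\|_2\le C_{xxx}$ for given positive constants. Fix $\alpha>0$, $t_0=0$ and $\mathbf{x}_0\in\mathbb{R}^n$. Construct recursively, for $k=0,1,2,\dots$: $\dot{\mathbf{x}}_k=-\nabla_{\mathbf{x}\mathbf{x}}^{-1} f(\mathbf{x}_k,t_k)[\alpha\nabla_{\mathbf{x}} f(\mathbf{x}_k,t_k)+\nabla_{\mathbf{x}t} f(\mathbf{x}_k,t_k)]$; $\mathbf{x}(t)=\mathbf{x}_k+\dot{\mathbf{x}}_k(t-t_k)$ for $t\in[t_k,t_{k+1}]$; $V(t)=\tfrac12\|\nabla_{\mathbf{x}} f(\mathbf{x}(t),t)\|_2^2$; $t_{k+1}$ is the smallest $t>t_k$ with $\phi_k(t)=0$; and $\mathbf{x}_{k+1}=\mathbf{x}_k+\dot{\mathbf{x}}_k(t_{k+1}-t_k)$.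 Here $\phi_k$ is either (for all $k$) $$\phi_k(t)=\tfrac12 a_kb_k(t-t_k)^2+\big(a_k^2+b_k\sqrt{2V(t_k)}\big)(t-t_k)-2\alpha V(t_k)$$ or (for all $k$) $$\phi_k(t)=\tfrac12 b_k^2(t-t_k)^3+\tfrac32\alpha\sqrt{2V(t_k)}\,b_k(t-t_k)^2+\big(\sqrt{2V(t_k)}\,b_k+2\alpha^2V(t_k)\big)(t-t_k)-2\alpha V(t_k),$$ with $a_k=C_{xx}\|\dot{\mathbf{x}}_k\|_2+C_{xt}$ and $b_k=(C_{xxx}\|\dot{\mathbf{x}}_k\|_1+2C_{xxt})\|\dot{\mathbf{x}}_k\|_2+C_{xtt}$. Assume $V(t_k)>0$ for every $k$ (so that each $t_{k+1}$ is well defined). Then for every $\epsilon>0$ there exists a finite $k'(\epsilon)\in\mathbb{Z}_+$ with $V(t_{k'(\epsilon)})<\epsilon$.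
   Context: $\nabla_{\mathbf{x}} f$ is the gradient in $\mathbf{x}$, $\nabla_{\mathbf{x}\mathbf{x}} f$ the Hessian in $\mathbf{x}$, $\nabla_{\mathbf{x}t} f=\frac{\partial}{\partial t}\nabla_{\mathbf{x}} f$, $\nabla_{\mathbf{x}\mathbf{x}t} f=\frac{\partial}{\partial t}\nabla_{\mathbf{x}\mathbf{x}} f$, $\nabla_{\mathbf{x}tt} f=\frac{\partial^2}{\partial t^2}\nabla_{\mathbf{x}} f$, $\nabla_{\mathbf{x}\mathbf{x}\mathbf{x}_i} f=\frac{\partial}{\partial \mathbf{x}_i}\nabla_{\mathbf{x}\mathbf{x}} f$. Matrix norms are spectral norms; $\|\cdot\|_1$ is the vector one-norm. *)

theory Defs
  imports "HOL-Analysis.Analysis"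
begin

text \<open>The derivatives of f are given as bounded linear maps:
  Df p (first derivative), D2f p (second), D3f p (third), where
  D2f p u v is the second directional derivative (first along v, then along u), etc.\<close>

definition C3_on ::
  "('a::real_normed_vector) set \<Rightarrow> ('a \<Rightarrow> real) \<Rightarrow> ('a \<Rightarrow> 'a \<Rightarrow>\<^sub>L real)
   \<Rightarrow> ('a \<Rightarrow> 'a \<Rightarrow>\<^sub>L 'a \<Rightarrow>\<^sub>L real) \<Rightarrow> ('a \<Rightarrow> 'a \<Rightarrow>\<^sub>L 'a \<Rightarrow>\<^sub>L 'a \<Rightarrow>\<^sub>L real) \<Rightarrow> bool" where
  "C3_on D f Df D2f D3f \<longleftrightarrow>
     (\<forall>p\<in>D. (f has_derivative blinfun_apply (Df p)) (at p within D)) \<and>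
     (\<forall>p\<in>D. (Df has_derivative blinfun_apply (D2f p)) (at p within D)) \<and>
     (\<forall>p\<in>D. (D2f has_derivative blinfun_apply (D3f p)) (at p within D)) \<and>
     continuous_on D D3f"

definition ex :: "'n::finite \<Rightarrow> (real^'n) \<times> real" where
  "ex i = (axis i 1, 0)"

definition et :: "(real^'n::finite) \<times> real" where
  "et = (0, 1)"

definition gradx :: "((real^'n::finite) \<times> real \<Rightarrow> ((real^'n) \<times> real) \<Rightarrow>\<^sub>L real) \<Rightarrow> real^'n \<Rightarrow> real \<Rightarrow> real^'n" where
  "gradx Df x t = (\<chi> i. Df (x, t) (ex i))"

definition hessx :: "((real^'n::finite) \<times> real \<Rightarrow> ((real^'n) \<times> real) \<Rightarrow>\<^sub>L ((real^'n) \<times> real) \<Rightarrow>\<^sub>L real)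
    \<Rightarrow> real^'n \<Rightarrow> real \<Rightarrow> real^'n^'n" where
  "hessx D2f x t = (\<chi> i j. D2f (x, t) (ex i) (ex j))"

definition gradxt :: "((real^'n::finite) \<times> real \<Rightarrow> ((real^'n) \<times> real) \<Rightarrow>\<^sub>L ((real^'n) \<times> real) \<Rightarrow>\<^sub>L real)
    \<Rightarrow> real^'n \<Rightarrow> real \<Rightarrow> real^'n" where
  "gradxt D2f x t = (\<chi> i. D2f (x, t) et (ex i))"

definition hessxt :: "((real^'n::finite) \<times> real \<Rightarrow> ((real^'n) \<times> real) \<Rightarrow>\<^sub>L ((real^'n) \<times> real) \<Rightarrow>\<^sub>L ((real^'n) \<times> real) \<Rightarrow>\<^sub>L real)
    \<Rightarrow> real^'n \<Rightarrow> real \<Rightarrow> real^'n^'n" where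
  "hessxt D3f x t = (\<chi> i j. D3f (x, t) et (ex i) (ex j))"

definition gradxtt :: "((real^'n::finite) \<times> real \<Rightarrow> ((real^'n) \<times> real) \<Rightarrow>\<^sub>L ((real^'n) \<times> real) \<Rightarrow>\<^sub>L ((real^'n) \<times> real) \<Rightarrow>\<^sub>L real)
    \<Rightarrow> real^'n \<Rightarrow> real \<Rightarrow> real^'n" where
  "gradxtt D3f x t = (\<chi> i. D3f (x, t) et et (ex i))"

definition hessxxx :: "((real^'n::finite) \<times> real \<Rightarrow> ((real^'n) \<times> real) \<Rightarrow>\<^sub>L ((real^'n) \<times> real) \<Rightarrow>\<^sub>L ((real^'n) \<times> real) \<Rightarrow>\<^sub>L real)
    \<Rightarrow> real^'n \<Rightarrow> real \<Rightarrow> 'n \<Rightarrow> real^'n^'n" where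
  "hessxxx D3f x t l = (\<chi> i j. D3f (x, t) (ex l) (ex i) (ex j))"

definition specnorm :: "real^'n::finite^'n \<Rightarrow> real" where
  "specnorm A = onorm (\<lambda>v. A *v v)"

definition norm1 :: "real^'n::finite \<Rightarrow> real" where
  "norm1 v = (\<Sum>i\<in>UNIV. \<bar>v $ i\<bar>)"

definition xdot :: "((real^'n::finite) \<times> real \<Rightarrow> ((real^'n) \<times> real) \<Rightarrow>\<^sub>L real)
    \<Rightarrow> ((real^'n) \<times> real \<Rightarrow> ((real^'n) \<times> real) \<Rightarrow>\<^sub>L ((real^'n) \<times> real) \<Rightarrow>\<^sub>L real)
    \<Rightarrow> real \<Rightarrow> real^'n \<Rightarrow> real \<Rightarrow> real^'n" where
  "xdot Df D2f \<alpha> x t = - (matrix_inv (hessx D2f x t) *v (\<alpha> *\<^sub>R gradx Df x t + gradxt D2f x t))"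

definition Vf :: "((real^'n::finite) \<times> real \<Rightarrow> ((real^'n) \<times> real) \<Rightarrow>\<^sub>L real) \<Rightarrow> real^'n \<Rightarrow> real \<Rightarrow> real" where
  "Vf Df x t = 1/2 * (norm (gradx Df x t))^2"

definition acoef :: "real \<Rightarrow> real \<Rightarrow> real^'n::finite \<Rightarrow> real" where
  "acoef Cxx Cxt v = Cxx * norm v + Cxt"

definition bcoef :: "real \<Rightarrow> real \<Rightarrow> real \<Rightarrow> real^'n::finite \<Rightarrow> real" where
  "bcoef Cxxx Cxxt Cxtt v = (Cxxx * norm1 v + 2 * Cxxt) * norm v + Cxtt"

text \<open>phi_k(t) with s = t - t_k, V = V(t_k); cubic selects the second form\<close>
definition phi :: "bool \<Rightarrow> real \<Rightarrow> real \<Rightarrow> real \<Rightarrow> real \<Rightarrow> real \<Rightarrow> real" where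
  "phi cubic \<alpha> a b V s =
    (if cubic then 1/2 * b^2 * s^3 + 3/2 * \<alpha> * sqrt (2*V) * b * s^2
                   + (sqrt (2*V) * b + 2 * \<alpha>^2 * V) * s - 2 * \<alpha> * V
     else 1/2 * a * b * s^2 + (a^2 + b * sqrt (2*V)) * s - 2 * \<alpha> * V)"

end

theory Submission
  imports Defs
begin

text \<open>Along the k-th step (x_k + r \<cdot> xdot_k, t_k + r) the gradient g(r) = \<nabla>_x f satisfies
  g'(0) = -\<alpha> g(0) by the choice of xdot_k, and the third-order bounds control g' and g'' by a_k
  and b_k. Taylor estimates for g and g' therefore give V'(r) = g(r) \<bullet> g'(r) \<le> \<phi>_k(r),
  where \<phi>_k is increasing with \<phi>_k(0) = -2\<alpha> V(t_k) < 0. Hence V does not increase up to the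
  root t_(k+1) of \<phi>_k. While V(t_k) \<ge> \<epsilon>, strong convexity bounds xdot_k in terms of V(t_0),
  so a_k, b_k are uniformly bounded and \<phi>_k \<le> -\<alpha>\<epsilon> on a fixed interval [0, s]; each step
  then lowers V by at least \<alpha>\<epsilon>s, which cannot go on forever.\<close>

lemma has_derivative_along_line:
  fixes F :: "'a::real_normed_vector \<Rightarrow> real"
  assumes "(F has_derivative F') (at (a + s *\<^sub>R v))"
  shows "((\<lambda>s. F (a + s *\<^sub>R v)) has_derivative (\<lambda>h. h * F' v)) (at s within X)"
proof -
  have "((\<lambda>s. a + s *\<^sub>R v) has_derivative (\<lambda>h. h *\<^sub>R v)) (at s within X)"
    by (auto intro!: derivative_eq_intros)
  from has_derivative_in_compose[OF this has_derivative_subset[OF assms subset_UNIV]]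
  show ?thesis
    using linear_scale[OF has_derivative_linear[OF assms]] by (simp add: o_def)
qed

lemma has_derivative_blinfun_apply_left:
  "(G has_derivative G') F \<Longrightarrow> ((\<lambda>q. blinfun_apply (G q) w) has_derivative (\<lambda>u. blinfun_apply (G' u) w)) F"
  by (rule bounded_linear.has_derivative[OF blinfun.bounded_linear_left])

lemma continuous_blinfun_apply_left:
  "continuous F G \<Longrightarrow> continuous F (\<lambda>q. blinfun_apply (G q) w)"
  by (rule bounded_linear.continuous[OF blinfun.bounded_linear_left])

lemma continuous_on_blinfun_apply_left:
  "continuous_on S G \<Longrightarrow> continuous_on S (\<lambda>q. blinfun_apply (G q) w)"
  by (rule bounded_linear.continuous_on[OF blinfun.bounded_linear_left])

lemma second_difference_mean_value:
  fixes F :: "'a::real_normed_vector \<Rightarrow> real" and F' :: "'a \<Rightarrow> 'a \<Rightarrow> real"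
    and F'' :: "'a \<Rightarrow> 'a \<Rightarrow> 'a \<Rightarrow> real"
  assumes inS: "\<And>a b. 0 \<le> a \<Longrightarrow> a \<le> h \<Longrightarrow> 0 \<le> b \<Longrightarrow> b \<le> h \<Longrightarrow> p + a *\<^sub>R u + b *\<^sub>R v \<in> S"
    and d1: "\<And>q. q \<in> S \<Longrightarrow> (F has_derivative F' q) (at q)"
    and d2: "\<And>q w. q \<in> S \<Longrightarrow> ((\<lambda>q. F' q w) has_derivative (\<lambda>u. F'' q u w)) (at q)"
    and h: "0 \<le> h"
  obtains \<eta> \<xi> where "0 \<le> \<eta>" "\<eta> \<le> h" "0 \<le> \<xi>" "\<xi> \<le> h"
    "F (p + h *\<^sub>R u + h *\<^sub>R v) - F (p + h *\<^sub>R u) - F (p + h *\<^sub>R v) + F p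
       = h^2 * F'' (p + \<eta> *\<^sub>R u + \<xi> *\<^sub>R v) u v"
proof -
  have "\<exists>x\<in>{0..h}. (F (p + h *\<^sub>R u + h *\<^sub>R v) - F (p + h *\<^sub>R v)) - (F (p + h *\<^sub>R u + 0 *\<^sub>R v) - F (p + 0 *\<^sub>R v))
      = (\<lambda>k. k * F' (p + h *\<^sub>R u + x *\<^sub>R v) v - k * F' (p + x *\<^sub>R v) v) (h - 0)"
  proof (rule mvt_very_simple[OF h])
    fix x assume x: "0 \<le> x" "x \<le> h"
    have "p + h *\<^sub>R u + x *\<^sub>R v \<in> S" "p + x *\<^sub>R v \<in> S"
      using inS[of h x] inS[of 0 x] x h by auto
    then show "((\<lambda>s. F (p + h *\<^sub>R u + s *\<^sub>R v) - F (p + s *\<^sub>R v)) has_derivative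
        (\<lambda>k. k * F' (p + h *\<^sub>R u + x *\<^sub>R v) v - k * F' (p + x *\<^sub>R v) v)) (at x within {0..h})"
      by (intro has_derivative_diff has_derivative_along_line d1)
  qed
  then obtain \<xi> where \<xi>: "0 \<le> \<xi>" "\<xi> \<le> h"
    "F (p + h *\<^sub>R u + h *\<^sub>R v) - F (p + h *\<^sub>R u) - F (p + h *\<^sub>R v) + F p
       = h * (F' (p + \<xi> *\<^sub>R v + h *\<^sub>R u) v - F' (p + \<xi> *\<^sub>R v + 0 *\<^sub>R u) v)"
    by (auto simp: algebra_simps)
  have "\<exists>x\<in>{0..h}. F' (p + \<xi> *\<^sub>R v + h *\<^sub>R u) v - F' (p + \<xi> *\<^sub>R v + 0 *\<^sub>R u) v
      = (\<lambda>k. k * F'' (p + \<xi> *\<^sub>R v + x *\<^sub>R u) u v) (h - 0)"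
  proof (rule mvt_very_simple[OF h])
    fix x assume x: "0 \<le> x" "x \<le> h"
    then have "p + \<xi> *\<^sub>R v + x *\<^sub>R u \<in> S"
      using inS[of x \<xi>] \<xi> by (auto simp: algebra_simps)
    then show "((\<lambda>s. F' (p + \<xi> *\<^sub>R v + s *\<^sub>R u) v) has_derivative
        (\<lambda>k. k * F'' (p + \<xi> *\<^sub>R v + x *\<^sub>R u) u v)) (at x within {0..h})"
      by (intro has_derivative_along_line[where F = "\<lambda>q. F' q v"] d2)
  qed
  then obtain \<eta> where \<eta>: "0 \<le> \<eta>" "\<eta> \<le> h"
    "F' (p + \<xi> *\<^sub>R v + h *\<^sub>R u) v - F' (p + \<xi> *\<^sub>R v + 0 *\<^sub>R u) v = h * F'' (p + \<eta> *\<^sub>R u + \<xi> *\<^sub>R v) u v"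
    by (auto simp: algebra_simps)
  show ?thesis
    using \<xi> \<eta> by (intro that[of \<eta> \<xi>]) (simp_all add: power2_eq_square)
qed

lemma second_difference_approx:
  fixes F :: "'a::real_normed_vector \<Rightarrow> real" and F' :: "'a \<Rightarrow> 'a \<Rightarrow> real"
    and F'' :: "'a \<Rightarrow> 'a \<Rightarrow> 'a \<Rightarrow> real"
  assumes S: "open S" "p \<in> S"
    and d1: "\<And>q. q \<in> S \<Longrightarrow> (F has_derivative F' q) (at q)"
    and d2: "\<And>q w. q \<in> S \<Longrightarrow> ((\<lambda>q. F' q w) has_derivative (\<lambda>u. F'' q u w)) (at q)"
    and c: "continuous (at p) (\<lambda>q. F'' q u v)"
    and e: "e > 0"
  obtains \<delta> where "\<delta> > 0" "\<And>h. 0 < h \<Longrightarrow> h < \<delta> \<Longrightarrow>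
    \<bar>F (p + h *\<^sub>R u + h *\<^sub>R v) - F (p + h *\<^sub>R u) - F (p + h *\<^sub>R v) + F p - h^2 * F'' p u v\<bar> \<le> e * h^2"
proof -
  obtain d0 where d0: "d0 > 0" "ball p d0 \<subseteq> S"
    using S open_contains_ball by blast
  obtain d1 where d1': "d1 > 0" "\<And>q. dist q p < d1 \<Longrightarrow> dist (F'' q u v) (F'' p u v) < e"
    using c e unfolding continuous_at_eps_delta by blast
  define \<delta> where "\<delta> = min d0 d1 / (norm u + norm v + 1)"
  have npos: "norm u + norm v + 1 > 0"
    by (simp add: add_nonneg_pos)
  have close: "dist (p + a *\<^sub>R u + b *\<^sub>R v) p < min d0 d1"
    if "0 \<le> a" "a \<le> h" "0 \<le> b" "b \<le> h" "h < \<delta>" for a b h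
  proof -
    have "norm (a *\<^sub>R u + b *\<^sub>R v) \<le> a * norm u + b * norm v"
      using norm_triangle_ineq[of "a *\<^sub>R u" "b *\<^sub>R v"] that by simp
    also have "\<dots> \<le> h * (norm u + norm v + 1)"
      using that mult_right_mono[of a h "norm u"] mult_right_mono[of b h "norm v"]
      by (simp add: distrib_left)
    also have "\<dots> < \<delta> * (norm u + norm v + 1)"
      using that npos by (intro mult_strict_right_mono) auto
    also have "\<dots> = min d0 d1"
      unfolding \<delta>_def using npos by simp
    finally show ?thesis
      by (simp add: dist_norm add.assoc)
  qed
  show ?thesis
  proof (rule that)
    show "\<delta> > 0"
      using d0 d1' npos by (simp add: \<delta>_def)
    fix h assume h: "0 < h" "h < \<delta>"
    have "p + a *\<^sub>R u + b *\<^sub>R v \<in> S" if "0 \<le> a" "a \<le> h" "0 \<le> b" "b \<le> h" for a b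
      using close[OF that h(2)] d0(2) by (auto simp: dist_commute)
    then obtain \<eta> \<xi> where \<eta>\<xi>: "0 \<le> \<eta>" "\<eta> \<le> h" "0 \<le> \<xi>" "\<xi> \<le> h"
      "F (p + h *\<^sub>R u + h *\<^sub>R v) - F (p + h *\<^sub>R u) - F (p + h *\<^sub>R v) + F p
         = h^2 * F'' (p + \<eta> *\<^sub>R u + \<xi> *\<^sub>R v) u v"
      using second_difference_mean_value[OF _ d1 d2] h(1) by (metis less_imp_le)
    have "\<bar>F'' (p + \<eta> *\<^sub>R u + \<xi> *\<^sub>R v) u v - F'' p u v\<bar> \<le> e"
      using d1'(2) close[OF \<eta>\<xi>(1-4) h(2)] by (simp add: dist_real_def less_imp_le)
    then have "h^2 * \<bar>F'' (p + \<eta> *\<^sub>R u + \<xi> *\<^sub>R v) u v - F'' p u v\<bar> \<le> h^2 * e"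
      by (intro mult_left_mono) auto
    then show "\<bar>F (p + h *\<^sub>R u + h *\<^sub>R v) - F (p + h *\<^sub>R u) - F (p + h *\<^sub>R v) + F p - h^2 * F'' p u v\<bar> \<le> e * h^2"
      unfolding \<eta>\<xi>(5) by (simp add: abs_mult right_diff_distrib[symmetric] mult.commute[of e])
  qed
qed

text \<open>Schwarz: the second difference is symmetric in u and v and is h^2 F'' p u v + o(h^2).\<close>

lemma mixed_partials_symmetric:
  fixes F :: "'a::real_normed_vector \<Rightarrow> real" and F' :: "'a \<Rightarrow> 'a \<Rightarrow> real"
    and F'' :: "'a \<Rightarrow> 'a \<Rightarrow> 'a \<Rightarrow> real"
  assumes S: "open S" "p \<in> S"
    and d1: "\<And>q. q \<in> S \<Longrightarrow> (F has_derivative F' q) (at q)"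
    and d2: "\<And>q w. q \<in> S \<Longrightarrow> ((\<lambda>q. F' q w) has_derivative (\<lambda>u. F'' q u w)) (at q)"
    and c: "\<And>w z. continuous (at p) (\<lambda>q. F'' q w z)"
  shows "F'' p u v = F'' p v u"
proof (rule ccontr)
  assume ne: "F'' p u v \<noteq> F'' p v u"
  define e where "e = \<bar>F'' p u v - F'' p v u\<bar> / 4"
  have e: "e > 0"
    using ne by (simp add: e_def)
  obtain \<delta>1 where \<delta>1: "\<delta>1 > 0" "\<And>h. 0 < h \<Longrightarrow> h < \<delta>1 \<Longrightarrow>
      \<bar>F (p + h *\<^sub>R u + h *\<^sub>R v) - F (p + h *\<^sub>R u) - F (p + h *\<^sub>R v) + F p - h^2 * F'' p u v\<bar> \<le> e * h^2"
    using second_difference_approx[OF S d1 d2 c e] by blast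
  obtain \<delta>2 where \<delta>2: "\<delta>2 > 0" "\<And>h. 0 < h \<Longrightarrow> h < \<delta>2 \<Longrightarrow>
      \<bar>F (p + h *\<^sub>R v + h *\<^sub>R u) - F (p + h *\<^sub>R v) - F (p + h *\<^sub>R u) + F p - h^2 * F'' p v u\<bar> \<le> e * h^2"
    using second_difference_approx[OF S d1 d2 c e] by blast
  define h where "h = min \<delta>1 \<delta>2 / 2"
  have h: "0 < h" "h < \<delta>1" "h < \<delta>2"
    using \<delta>1 \<delta>2 by (auto simp: h_def)
  have "\<bar>h^2 * F'' p u v - h^2 * F'' p v u\<bar> \<le> 2 * e * h^2"
    using \<delta>1(2)[OF h(1,2)] \<delta>2(2)[OF h(1,3)] by (simp add: algebra_simps)
  then have "h^2 * \<bar>F'' p u v - F'' p v u\<bar> \<le> h^2 * (2 * e)"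
    by (metis abs_mult abs_power2 mult.commute mult.left_commute right_diff_distrib)
  then have "\<bar>F'' p u v - F'' p v u\<bar> \<le> 2 * e"
    using h by simp
  then show False
    using e unfolding e_def by simp
qed

lemma C3_on_open_subset_symmetric:
  assumes C3: "C3_on D f Df D2f D3f" and S: "open S" "S \<subseteq> D" and q: "q \<in> S"
  shows "D2f q u v = D2f q v u"
    and "D3f q w u v = D3f q w v u"
    and "D3f q u w v = D3f q w u v"
proof -
  have at_S: "(F has_derivative F' r) (at r)"
    if "r \<in> S" "\<And>p. p \<in> D \<Longrightarrow> (F has_derivative F' p) (at p within D)" for r F F'
  proof -
    have "(F has_derivative F' r) (at r within S)"
      using that S(2) by (intro has_derivative_subset[OF that(2)]) auto
    then show ?thesis
      using at_within_open[OF that(1) S(1)] by simp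
  qed
  have dD: "\<And>p. p \<in> D \<Longrightarrow> (f has_derivative Df p) (at p within D)"
    "\<And>p. p \<in> D \<Longrightarrow> (Df has_derivative D2f p) (at p within D)"
    "\<And>p. p \<in> D \<Longrightarrow> (D2f has_derivative D3f p) (at p within D)"
    using C3 unfolding C3_on_def by auto
  have df: "(f has_derivative Df r) (at r)"
   and d2: "(Df has_derivative D2f r) (at r)"
   and d3: "(D2f has_derivative D3f r) (at r)" if "r \<in> S" for r
    using at_S[OF that dD(1)] at_S[OF that dD(2)] at_S[OF that dD(3)] by auto
  have "continuous_on S D3f"
    using C3 S(2) continuous_on_subset unfolding C3_on_def by blast
  then have D3f_cont: "isCont D3f q"
    using continuous_on_eq_continuous_at[OF S(1)] q by blast
  have D2f_sym: "D2f r u v = D2f r v u" if r: "r \<in> S" for r u v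
  proof (rule mixed_partials_symmetric[OF S(1) r, where F = f and F' = "\<lambda>q. blinfun_apply (Df q)"])
    show "((\<lambda>q. Df q w) has_derivative (\<lambda>u. D2f r u w)) (at r)" if "r \<in> S" for r w
      using has_derivative_blinfun_apply_left[OF d2[OF that]] .
    have "isCont D2f r"
      using has_derivative_continuous[OF d3[OF r]] .
    then show "isCont (\<lambda>q. D2f q w z) r" for w z
      by (intro continuous_blinfun_apply_left)
  qed (use df in blast)
  then show "D2f q u v = D2f q v u"
    using q .
  have "((\<lambda>q. D2f q u v - D2f q v u) has_derivative (\<lambda>w. D3f q w u v - D3f q w v u)) (at q)"
    by (intro has_derivative_diff has_derivative_blinfun_apply_left d3 q)
  then have "((\<lambda>q. 0) has_derivative (\<lambda>w. D3f q w u v - D3f q w v u)) (at q)"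
    by (rule has_derivative_transform_within_open[OF _ S(1) q]) (use D2f_sym in simp)
  from has_derivative_unique[OF this has_derivative_const]
  show "D3f q w u v = D3f q w v u"
    by (metis eq_iff_diff_eq_0)
  show "D3f q u w v = D3f q w u v"
  proof (rule mixed_partials_symmetric[OF S(1) q, where F = "\<lambda>q. Df q v" and F' = "\<lambda>q u. D2f q u v"])
    show "((\<lambda>q. Df q v) has_derivative (\<lambda>u. D2f r u v)) (at r)" if "r \<in> S" for r
      using has_derivative_blinfun_apply_left[OF d2[OF that]] .
    show "((\<lambda>q. D2f q w v) has_derivative (\<lambda>u. D3f r u w v)) (at r)" if "r \<in> S" for r w
      using has_derivative_blinfun_apply_left[OF has_derivative_blinfun_apply_left[OF d3[OF that]]] .
    show "isCont (\<lambda>q. D3f q w z v) q" for w z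
      using D3f_cont by (intro continuous_blinfun_apply_left)
  qed
qed

text \<open>Schwarz's theorem needs an open set, so symmetry is proved on the open half-space
  t > 0 and extended to its closure t \<ge> 0 by continuity.\<close>

lemma C3_on_half_space_symmetric:
  fixes f :: "('a::real_normed_vector) \<times> real \<Rightarrow> real"
  assumes C3: "C3_on (UNIV \<times> {0..}) f Df D2f D3f" and p: "p \<in> UNIV \<times> {0..}"
  shows D2f_symmetric: "D2f p u v = D2f p v u"
    and D3f_symmetric_right: "D3f p w u v = D3f p w v u"
    and D3f_symmetric_left: "D3f p u w v = D3f p w u v"
proof -
  define S :: "('a \<times> real) set" where "S = UNIV \<times> {0<..}"
  have S: "open S" "S \<subseteq> UNIV \<times> {0..}" "closure S = UNIV \<times> {0..}"
    unfolding S_def by (auto intro: open_Times simp: closure_Times)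
  note sym = C3_on_open_subset_symmetric[OF C3 S(1,2)]
  have c3: "continuous_on (UNIV \<times> {0..}) D3f"
    using C3 unfolding C3_on_def by blast
  have "\<And>p. p \<in> UNIV \<times> {0..} \<Longrightarrow> (D2f has_derivative D3f p) (at p within UNIV \<times> {0..})"
    using C3 unfolding C3_on_def by blast
  then have c2: "continuous_on (UNIV \<times> {0..}) D2f"
    by (rule has_derivative_continuous_on)
  have extend: "F p = 0"
    if "continuous_on (UNIV \<times> {0..}) F" "\<And>q. q \<in> S \<Longrightarrow> F q = 0" for F :: "'a \<times> real \<Rightarrow> real"
    by (rule continuous_constant_on_closure[where S = S]) (use that p S(3) in auto)
  show "D2f p u v = D2f p v u"
    using extend[of "\<lambda>q. D2f q u v - D2f q v u"] sym(1)
    by (simp add: continuous_on_diff continuous_on_blinfun_apply_left c2)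
  show "D3f p w u v = D3f p w v u"
    using extend[of "\<lambda>q. D3f q w u v - D3f q w v u"] sym(2)
    by (simp add: continuous_on_diff continuous_on_blinfun_apply_left c3)
  show "D3f p u w v = D3f p w u v"
    using extend[of "\<lambda>q. D3f q u w v - D3f q w u v"] sym(3)
    by (simp add: continuous_on_diff continuous_on_blinfun_apply_left c3)
qed

lemma
  fixes H :: "real^'n::finite^'n"
  assumes m: "m > 0" and pd: "\<And>v. v \<bullet> (H *v v) \<ge> m * (norm v)^2"
  shows matrix_vector_mult_matrix_inv_pos_def: "H *v (matrix_inv H *v z) = z"
    and norm_matrix_inv_pos_def_le: "m * norm (matrix_inv H *v z) \<le> norm z"
proof -
  have lb: "m * norm u \<le> norm (H *v u)" for u
  proof -
    have "m * (norm u)^2 \<le> norm u * norm (H *v u)"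
      using pd[of u] norm_cauchy_schwarz[of u "H *v u"] by linarith
    then show ?thesis
      by (cases "norm u = 0") (auto simp: power2_eq_square mult.assoc[symmetric] mult.commute[of m])
  qed
  have "inj ((*v) H)"
  proof (rule injI)
    fix a b assume "H *v a = H *v b"
    then have "H *v (a - b) = 0"
      by (simp add: matrix_vector_mult_diff_distrib)
    then show "a = b"
      using lb[of "a - b"] m by (simp add: mult_le_0_iff)
  qed
  then have "invertible H"
    using matrix_left_invertible_injective invertible_left_inverse by blast
  then have "H ** matrix_inv H = mat 1"
    unfolding matrix_inv_def invertible_def by (rule someI2_ex) simp
  then show eq: "H *v (matrix_inv H *v z) = z"
    by (simp add: matrix_vector_mul_assoc)
  show "m * norm (matrix_inv H *v z) \<le> norm z"
    using lb[of "matrix_inv H *v z"] eq by simp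
qed

lemma norm_matrix_vector_le_specnorm: "norm (A *v v) \<le> specnorm A * norm v"
  unfolding specnorm_def by (rule onorm) simp

lemma norm1_nonneg: "norm1 v \<ge> 0"
  unfolding norm1_def by (simp add: sum_nonneg)

lemma norm1_le_card_mult_norm: "norm1 (v::real^'n::finite) \<le> real CARD('n) * norm v"
proof -
  have "norm1 v \<le> (\<Sum>i\<in>(UNIV::'n set). norm v)"
    unfolding norm1_def by (rule sum_mono) (metis component_le_norm_cart real_norm_def)
  then show ?thesis
    by simp
qed

lemma vec_along_line_has_vector_derivative:
  fixes c :: "'n::finite \<Rightarrow> ('a::real_normed_vector) \<times> real \<Rightarrow> real"
  assumes dc: "\<And>i p. p \<in> D \<Longrightarrow> (c i has_derivative c' i p) (at p within D)"
    and line: "\<And>s. s \<in> X \<Longrightarrow> (x0 + s *\<^sub>R v, t0 + s) \<in> D" and s: "s \<in> X"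
  shows "((\<lambda>s. \<chi> i. c i (x0 + s *\<^sub>R v, t0 + s)) has_vector_derivative
           (\<chi> i. c' i (x0 + s *\<^sub>R v, t0 + s) (v, 1))) (at s within X)"
proof -
  let ?p = "x0 + s *\<^sub>R v" and ?q = "t0 + s"
  have "((\<lambda>s. c i (x0 + s *\<^sub>R v, t0 + s)) has_real_derivative c' i (?p, ?q) (v, 1)) (at s within X)" for i
  proof -
    have dline: "((\<lambda>s. (x0 + s *\<^sub>R v, t0 + s)) has_derivative (\<lambda>y. (y *\<^sub>R v, y))) (at s within X)"
      by (intro has_derivative_Pair derivative_eq_intros) auto
    have "((\<lambda>s. c i (x0 + s *\<^sub>R v, t0 + s)) has_derivative (\<lambda>y. c' i (?p, ?q) (y *\<^sub>R v, y))) (at s within X)"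
      by (rule has_derivative_in_compose2[OF dc _ s dline]) (use line in auto)
    moreover have "c' i (?p, ?q) (y *\<^sub>R v, y) = y * c' i (?p, ?q) (v, 1)" for y
      using linear_scale[OF has_derivative_linear[OF dc[of _ i, OF line[OF s]]], of y "(v, 1)"] by simp
    ultimately show ?thesis
      by (simp add: has_field_derivative_def mult_commute_abs)
  qed
  then have "((\<lambda>s. c i (x0 + s *\<^sub>R v, t0 + s) *\<^sub>R axis i (1::real)) has_vector_derivative
      c' i (?p, ?q) (v, 1) *\<^sub>R axis i 1) (at s within X)" for i
    by (rule has_vector_derivative_scaleR[OF _ has_vector_derivative_const, simplified])
  then have "((\<lambda>s. \<Sum>i\<in>UNIV. c i (x0 + s *\<^sub>R v, t0 + s) *\<^sub>R axis i (1::real)) has_vector_derivative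
      (\<Sum>i\<in>UNIV. c' i (?p, ?q) (v, 1) *\<^sub>R axis i 1)) (at s within X)"
    by (rule has_vector_derivative_sum)
  moreover have "(\<chi> i. e i) = (\<Sum>i\<in>UNIV. e i *\<^sub>R axis i (1::real))" for e :: "'n \<Rightarrow> real"
    by (simp add: vec_eq_iff sum_component axis_def if_distrib sum.delta cong: if_cong)
  ultimately show ?thesis
    by simp
qed

lemma norm_diff_le_of_vector_derivative_bound:
  fixes F :: "real \<Rightarrow> 'a::real_inner"
  assumes ab: "a \<le> b"
    and dF: "\<And>s. s \<in> {a..b} \<Longrightarrow> (F has_vector_derivative F' s) (at s within {a..b})"
    and d\<beta>: "\<And>s. s \<in> {a..b} \<Longrightarrow> (\<beta> has_real_derivative \<beta>' s) (at s within {a..b})"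
    and bnd: "\<And>s. s \<in> {a..b} \<Longrightarrow> norm (F' s) \<le> \<beta>' s"
  shows "norm (F b - F a) \<le> \<beta> b - \<beta> a"
proof -
  define u where "u = F b - F a"
  have "\<exists>x\<in>{a..b}. \<beta> b - \<beta> a = (\<lambda>h. \<beta>' x * h) (b - a)"
    using d\<beta> by (intro mvt_very_simple[OF ab]) (simp add: has_field_derivative_def)
  then have \<beta>_incr: "\<beta> b - \<beta> a \<ge> 0"
    using bnd ab by (metis atLeastAtMost_iff diff_ge_0_iff_ge norm_ge_zero order.trans zero_le_mult_iff)
  have "\<exists>x\<in>{a..b}. (u \<bullet> F b - norm u * \<beta> b) - (u \<bullet> F a - norm u * \<beta> a)
      = (\<lambda>h. u \<bullet> (h *\<^sub>R F' x) - norm u * (\<beta>' x * h)) (b - a)"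
  proof (rule mvt_very_simple[OF ab])
    fix x assume "a \<le> x" "x \<le> b"
    then show "((\<lambda>s. u \<bullet> F s - norm u * \<beta> s) has_derivative
        (\<lambda>h. u \<bullet> (h *\<^sub>R F' x) - norm u * (\<beta>' x * h))) (at x within {a..b})"
      using dF[of x] d\<beta>[of x] unfolding has_vector_derivative_def has_field_derivative_def
      by (intro has_derivative_diff has_derivative_mult_right has_derivative_inner_right) auto
  qed
  then obtain y where y: "y \<in> {a..b}"
    "(u \<bullet> F b - norm u * \<beta> b) - (u \<bullet> F a - norm u * \<beta> a) = (b - a) * (u \<bullet> F' y - norm u * \<beta>' y)"
    by (auto simp: right_diff_distrib mult.commute mult.left_commute)
  have "u \<bullet> F' y \<le> norm u * norm (F' y)"
    by (rule norm_cauchy_schwarz)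
  also have "\<dots> \<le> norm u * \<beta>' y"
    using bnd[OF y(1)] by (simp add: mult_left_mono)
  finally have "(b - a) * (u \<bullet> F' y - norm u * \<beta>' y) \<le> 0"
    using ab by (simp add: mult_nonneg_nonpos)
  then have "u \<bullet> u \<le> norm u * (\<beta> b - \<beta> a)"
    using y(2) unfolding u_def by (simp add: algebra_simps inner_diff_right)
  then have "norm u * norm u \<le> norm u * (\<beta> b - \<beta> a)"
    by (simp add: power2_eq_square[symmetric] dot_square_norm)
  then show ?thesis
    using \<beta>_incr unfolding u_def by (cases "F b - F a = 0") auto
qed

lemma increment_le_of_derivative_le_mono:
  fixes W \<phi> :: "real \<Rightarrow> real"
  assumes dW: "\<And>r. 0 \<le> r \<Longrightarrow> (W has_real_derivative W' r) (at r within {0..})"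
    and W'_le: "\<And>r. 0 \<le> r \<Longrightarrow> W' r \<le> \<phi> r"
    and mono: "\<And>r r'. 0 \<le> r \<Longrightarrow> r \<le> r' \<Longrightarrow> \<phi> r \<le> \<phi> r'"
    and pq: "0 \<le> p" "p \<le> q"
  shows "W q - W p \<le> (q - p) * \<phi> q"
proof -
  have "\<exists>x\<in>{p..q}. W q - W p = (\<lambda>h. W' x * h) (q - p)"
  proof (rule mvt_very_simple[OF pq(2)])
    fix x assume "p \<le> x" "x \<le> q"
    then have "(W has_real_derivative W' x) (at x within {p..q})"
      using pq by (intro DERIV_subset[OF dW]) auto
    then show "(W has_derivative (\<lambda>h. W' x * h)) (at x within {p..q})"
      by (simp add: has_field_derivative_def)
  qed
  then obtain x where x: "x \<in> {p..q}" "W q - W p = W' x * (q - p)"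
    by auto
  have "W' x \<le> \<phi> q"
    using W'_le[of x] mono[of x q] x pq by auto
  then show ?thesis
    using x pq by (simp add: mult.commute mult_right_mono)
qed

lemma inner_perturbed_descent_le_quadratic:
  fixes g0 d e G :: "'a::real_inner"
  assumes G: "G = -(\<alpha> *\<^sub>R g0) + e" and d: "norm d \<le> a * s" and e: "norm e \<le> b * s"
    and Gb: "norm G \<le> a" and s: "s \<ge> 0" and a: "a \<ge> 0" and b: "b \<ge> 0"
  shows "(g0 + d) \<bullet> G \<le> 1/2 * a * b * s^2 + (a^2 + b * norm g0) * s - \<alpha> * (norm g0)^2"
proof -
  have as: "0 \<le> a * s"
    using a s by simp
  have dG_le: "d \<bullet> G \<le> a * s * a"
    using order_trans[OF norm_cauchy_schwarz[of d G] mult_mono[OF d Gb as norm_ge_zero]] .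
  have g0e_le: "g0 \<bullet> e \<le> norm g0 * (b * s)"
    using order_trans[OF norm_cauchy_schwarz[of g0 e] mult_left_mono[OF e norm_ge_zero]] .
  have g0G_eq: "g0 \<bullet> G = - \<alpha> * (norm g0)^2 + g0 \<bullet> e"
    unfolding G by (simp add: inner_add_right inner_diff_right power2_norm_eq_inner)
  have quad_nonneg: "0 \<le> 1/2 * a * b * s^2"
    using a b s by simp
  have "(g0 + d) \<bullet> G = g0 \<bullet> G + d \<bullet> G"
    by (simp add: inner_add_left)
  also have "\<dots> \<le> - \<alpha> * (norm g0)^2 + norm g0 * (b * s) + a * s * a"
    using dG_le g0e_le g0G_eq by linarith
  also have "\<dots> = (a^2 + b * norm g0) * s - \<alpha> * (norm g0)^2"
    by (simp add: algebra_simps power2_eq_square)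
  finally show ?thesis
    using quad_nonneg by linarith
qed

lemma inner_perturbed_descent_le_cubic:
  fixes g0 R e :: "'a::real_inner"
  assumes R: "norm R \<le> b * s^2 / 2" and e: "norm e \<le> b * s"
    and s: "s \<ge> 0" and al: "\<alpha> > 0" and b: "b \<ge> 0"
  shows "((1 - \<alpha> * s) *\<^sub>R g0 + R) \<bullet> (-(\<alpha> *\<^sub>R g0) + e) \<le>
     1/2 * b^2 * s^3 + 3/2 * \<alpha> * norm g0 * b * s^2
     + (norm g0 * b + \<alpha>^2 * (norm g0)^2) * s - \<alpha> * (norm g0)^2"
proof -
  have expand: "((1 - \<alpha> * s) *\<^sub>R g0 + R) \<bullet> (-(\<alpha> *\<^sub>R g0) + e) =
      - \<alpha> * (1 - \<alpha> * s) * (norm g0)^2 + (1 - \<alpha> * s) * (g0 \<bullet> e) - \<alpha> * (R \<bullet> g0) + R \<bullet> e"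
    by (simp add: inner_add_left inner_add_right power2_norm_eq_inner inner_commute algebra_simps)
  have g0e_abs_le: "\<bar>g0 \<bullet> e\<bar> \<le> norm g0 * (b * s)"
    using order_trans[OF Cauchy_Schwarz_ineq2[of g0 e] mult_left_mono[OF e norm_ge_zero]] .
  have as: "0 \<le> \<alpha> * s"
    using al s by simp
  have g0e_term_le: "(1 - \<alpha> * s) * (g0 \<bullet> e) \<le> (1 + \<alpha> * s) * (norm g0 * (b * s))"
  proof -
    have "(1 - \<alpha> * s) * (g0 \<bullet> e) \<le> \<bar>1 - \<alpha> * s\<bar> * \<bar>g0 \<bullet> e\<bar>"
      by (metis abs_ge_self abs_mult)
    also have "\<dots> \<le> (1 + \<alpha> * s) * (norm g0 * (b * s))"
    proof (rule mult_mono)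
      show "\<bar>1 - \<alpha> * s\<bar> \<le> 1 + \<alpha> * s" "0 \<le> 1 + \<alpha> * s"
        using as by linarith+
    qed (use g0e_abs_le in simp_all)
    finally show ?thesis .
  qed
  have Rg0_abs_le: "\<bar>R \<bullet> g0\<bar> \<le> b * s^2 / 2 * norm g0"
    using order_trans[OF Cauchy_Schwarz_ineq2[of R g0] mult_right_mono[OF R norm_ge_zero]] .
  have Rg0_term_le: "- \<alpha> * (R \<bullet> g0) \<le> \<alpha> * (b * s^2 / 2 * norm g0)"
    using mult_left_mono[of "- (R \<bullet> g0)" "b * s^2 / 2 * norm g0" \<alpha>] Rg0_abs_le al by simp
  have bs2: "0 \<le> b * s^2 / 2"
    using b by simp
  have Re_le: "R \<bullet> e \<le> b * s^2 / 2 * (b * s)"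
    using order_trans[OF norm_cauchy_schwarz[of R e] mult_mono[OF R e bs2 norm_ge_zero]] .
  have "((1 - \<alpha> * s) *\<^sub>R g0 + R) \<bullet> (-(\<alpha> *\<^sub>R g0) + e) \<le>
      - \<alpha> * (1 - \<alpha> * s) * (norm g0)^2 + (1 + \<alpha> * s) * (norm g0 * (b * s))
        + \<alpha> * (b * s^2 / 2 * norm g0) + b * s^2 / 2 * (b * s)"
    unfolding expand using g0e_term_le Rg0_term_le Re_le by linarith
  also have "\<dots> = 1/2 * b^2 * s^3 + 3/2 * \<alpha> * norm g0 * b * s^2
      + (norm g0 * b + \<alpha>^2 * (norm g0)^2) * s - \<alpha> * (norm g0)^2"
    by (simp add: algebra_simps power2_eq_square power3_eq_cube)
  finally show ?thesis .
qed

lemma vec_pair_one_eq: "(v::real^'n::finite, 1::real) = (\<Sum>j\<in>UNIV. v$j *\<^sub>R ex j) + et"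
proof -
  have "(\<Sum>j\<in>UNIV. v$j *\<^sub>R axis j (1::real)) = v"
    using basis_expansion[of v] by (simp add: scalar_mult_eq_scaleR)
  then show ?thesis by (simp add: prod_eq_iff fst_sum snd_sum ex_def et_def)
qed

lemma blinfun_apply_pair_one:
  fixes B :: "((real^'n::finite) \<times> real) \<Rightarrow>\<^sub>L 'b::real_normed_vector"
  shows "B (v, 1) = (\<Sum>j\<in>UNIV. v$j *\<^sub>R B (ex j)) + B et"
  by (subst vec_pair_one_eq) (simp add: blinfun.add_right blinfun.sum_right blinfun.scaleR_right)

lemma D2f_along_direction_eq:
  fixes D2f :: "(real^'n::finite) \<times> real \<Rightarrow> ((real^'n) \<times> real) \<Rightarrow>\<^sub>L ((real^'n) \<times> real) \<Rightarrow>\<^sub>L real"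
  assumes sym2: "\<And>u w. D2f (x,t) u w = D2f (x,t) w u"
  shows "(\<chi> i. D2f (x,t) (v,1) (ex i)) = hessx D2f x t *v v + gradxt D2f x t"
proof -
  have "D2f (x,t) (v,1) (ex i) = (hessx D2f x t *v v) $ i + gradxt D2f x t $ i" for i
  proof -
    have "D2f (x,t) (v,1) (ex i) = (\<Sum>j\<in>UNIV. v$j * D2f (x,t) (ex j) (ex i)) + D2f (x,t) et (ex i)"
      by (simp add: blinfun_apply_pair_one blinfun.add_left blinfun.sum_left blinfun.scaleR_left)
    also have "\<dots> = (\<Sum>j\<in>UNIV. D2f (x,t) (ex i) (ex j) * v$j) + D2f (x,t) et (ex i)"
      by (simp add: sym2[of "ex i"] mult.commute)
    finally show ?thesis by (simp add: matrix_vector_mult_def hessx_def gradxt_def)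
  qed
  then show ?thesis by (simp add: vec_eq_iff)
qed

lemma D3f_along_direction_eq:
  fixes D3f :: "(real^'n::finite) \<times> real \<Rightarrow> ((real^'n) \<times> real) \<Rightarrow>\<^sub>L ((real^'n) \<times> real) \<Rightarrow>\<^sub>L ((real^'n) \<times> real) \<Rightarrow>\<^sub>L real"
  assumes s3a: "\<And>w u z. D3f (x,t) w u z = D3f (x,t) w z u"
    and s3b: "\<And>u w z. D3f (x,t) u w z = D3f (x,t) w u z"
  shows "(\<chi> i. D3f (x,t) (v,1) (v,1) (ex i)) =
     (\<Sum>l\<in>UNIV. v$l *\<^sub>R (hessxxx D3f x t l *v v)) + 2 *\<^sub>R (hessxt D3f x t *v v) + gradxtt D3f x t"
proof -
  let ?T = "\<lambda>a b c. D3f (x,t) a b c"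
  have "?T (v,1) (v,1) (ex i) = (\<Sum>l\<in>UNIV. v$l *\<^sub>R (hessxxx D3f x t l *v v)) $ i + (2 *\<^sub>R (hessxt D3f x t *v v)) $ i + gradxtt D3f x t $ i" for i
  proof -
    have e1: "?T (v,1) (v,1) (ex i) = (\<Sum>l\<in>UNIV. v$l * ?T (ex l) (v,1) (ex i)) + ?T et (v,1) (ex i)"
      by (subst blinfun_apply_pair_one) (simp add: blinfun.add_left blinfun.sum_left blinfun.scaleR_left)
    have e2: "?T a (v,1) (ex i) = (\<Sum>j\<in>UNIV. v$j * ?T a (ex j) (ex i)) + ?T a et (ex i)" for a
      by (subst blinfun_apply_pair_one) (simp add: blinfun.add_left blinfun.sum_left blinfun.scaleR_left)
    have A: "(\<Sum>l\<in>UNIV. v$l * ?T (ex l) (v,1) (ex i)) =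
       (\<Sum>l\<in>UNIV. v$l * (\<Sum>j\<in>UNIV. ?T (ex l) (ex i) (ex j) * v$j)) + (\<Sum>l\<in>UNIV. ?T et (ex i) (ex l) * v$l)"
      unfolding e2 by (simp add: distrib_left sum.distrib s3a[of "ex _" "ex i"] mult.commute
          s3b[of "ex _" et] s3a[of et _ "ex i"])
    have B: "?T et (v,1) (ex i) = (\<Sum>j\<in>UNIV. ?T et (ex i) (ex j) * v$j) + ?T et et (ex i)"
      unfolding e2 by (simp add: s3a[of et _ "ex i"] mult.commute)
    show ?thesis unfolding e1 A B
      by (simp add: matrix_vector_mult_def hessxxx_def hessxt_def gradxtt_def sum_component)
  qed
  then show ?thesis by (simp add: vec_eq_iff)
qed

lemma phi_mono:
  assumes "0 \<le> r" "r \<le> r'" "0 \<le> a" "0 \<le> b" "0 \<le> V" "0 < \<alpha>"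
  shows "phi c \<alpha> a b V r \<le> phi c \<alpha> a b V r'"
proof -
  have r2: "r^2 \<le> r'^2" and r3: "r^3 \<le> r'^3" using assms by (auto intro: power_mono)
  have sq: "0 \<le> sqrt (2*V)" using assms by simp
  have q1: "1/2 * b^2 * r^3 \<le> 1/2 * b^2 * r'^3" using r3 by (intro mult_left_mono) auto
  have q2: "3/2 * \<alpha> * sqrt (2*V) * b * r^2 \<le> 3/2 * \<alpha> * sqrt (2*V) * b * r'^2"
    using r2 assms sq by (intro mult_left_mono) auto
  have q3: "(sqrt (2*V) * b + 2 * \<alpha>^2 * V) * r \<le> (sqrt (2*V) * b + 2 * \<alpha>^2 * V) * r'"
    using assms sq by (intro mult_left_mono) auto
  have q4: "1/2 * a * b * r^2 \<le> 1/2 * a * b * r'^2" using r2 assms by (intro mult_left_mono) auto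
  have q5: "(a^2 + b * sqrt (2*V)) * r \<le> (a^2 + b * sqrt (2*V)) * r'" using assms sq by (intro mult_left_mono) auto
  show ?thesis unfolding phi_def by (cases c) (simp only: if_True if_False; use q1 q2 q3 q4 q5 in linarith)+
qed

lemma cubic_le_linear:
  fixes r :: real
  assumes r: "0 \<le> r" "r \<le> 1"
    and c: "0 \<le> c1" "c1 \<le> C1" "0 \<le> c2" "c2 \<le> C2" "0 \<le> c3" "c3 \<le> C3"
  shows "c1 * r + c2 * r^2 + c3 * r^3 \<le> r * (C1 + C2 + C3)"
proof -
  have "r^2 \<le> r" "r^3 \<le> r"
    using power_decreasing[of 1 2 r] power_decreasing[of 1 3 r] r by auto
  then have "c1 * r \<le> C1 * r" "c2 * r^2 \<le> C2 * r" "c3 * r^3 \<le> C3 * r"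
    using r c by (auto intro: mult_mono)
  then show ?thesis
    by (simp add: algebra_simps)
qed

lemma phi_le_linear_bound:
  assumes r: "0 \<le> r" "r \<le> 1" and a: "0 \<le> a" "a \<le> A" and b: "0 \<le> b" "b \<le> B"
    and V: "0 \<le> V" "V \<le> Vm" and \<alpha>: "0 < \<alpha>"
  shows "phi c \<alpha> a b V r + 2 * \<alpha> * V \<le> r * (A^2 + B * sqrt (2*Vm) + 1/2 * A * B
    + (sqrt (2*Vm) * B + 2 * \<alpha>^2 * Vm) + 3/2 * \<alpha> * sqrt (2*Vm) * B + 1/2 * B^2)"
proof -
  have sq: "0 \<le> sqrt (2*V)" "sqrt (2*V) \<le> sqrt (2*Vm)"
    using V by auto
  have bsq: "b * sqrt (2*V) \<le> B * sqrt (2*Vm)"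
    using b sq by (intro mult_mono) auto
  have "a^2 \<le> A^2" "a * b \<le> A * B" "b^2 \<le> B^2"
    using a b by (auto intro: power_mono mult_mono)
  then have quad: "phi False \<alpha> a b V r + 2 * \<alpha> * V \<le> r * (A^2 + B * sqrt (2*Vm) + 1/2 * A * B + 0)"
    and cub: "phi True \<alpha> a b V r + 2 * \<alpha> * V \<le> r * ((sqrt (2*Vm) * B + 2 * \<alpha>^2 * Vm)
      + 3/2 * \<alpha> * sqrt (2*Vm) * B + 1/2 * B^2)"
    using cubic_le_linear[OF r, of "a^2 + b * sqrt (2*V)" "A^2 + B * sqrt (2*Vm)" "1/2 * a * b" "1/2 * A * B" 0 0]
      cubic_le_linear[OF r, of "sqrt (2*V) * b + 2 * \<alpha>^2 * V" "sqrt (2*Vm) * B + 2 * \<alpha>^2 * Vm"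
        "3/2 * \<alpha> * sqrt (2*V) * b" "3/2 * \<alpha> * sqrt (2*Vm) * B" "1/2 * b^2" "1/2 * B^2"]
      a b V \<alpha> sq bsq
    unfolding phi_def by (simp_all add: algebra_simps mult_left_mono add_mono)
  have "0 \<le> r * (A^2 + B * sqrt (2*Vm) + 1/2 * A * B)"
    "0 \<le> r * ((sqrt (2*Vm) * B + 2 * \<alpha>^2 * Vm) + 3/2 * \<alpha> * sqrt (2*Vm) * B + 1/2 * B^2)"
    using r a b V \<alpha> by auto
  then show ?thesis
    using quad cub by (cases c) (simp_all add: algebra_simps)
qed

lemma exists_below_of_uniform_decrease:
  fixes V :: "nat \<Rightarrow> real"
  assumes decrease: "\<And>k. \<epsilon> \<le> V k \<Longrightarrow> V (Suc k) \<le> V k - \<delta>" and \<delta>: "\<delta> > 0"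
  shows "\<exists>k. V k < \<epsilon>"
proof (rule ccontr)
  assume "\<not> (\<exists>k. V k < \<epsilon>)"
  then have above: "\<epsilon> \<le> V k" for k
    by (simp add: not_less)
  have linear: "V k \<le> V 0 - real k * \<delta>" for k
  proof (induction k)
    case (Suc k)
    then show ?case
      using decrease[OF above[of k]] by (simp add: algebra_simps)
  qed simp
  obtain k :: nat where "(V 0 - \<epsilon>) / \<delta> < real k"
    using reals_Archimedean2 by blast
  then have "V 0 - real k * \<delta> < \<epsilon>"
    using \<delta> by (simp add: field_simps)
  then show False
    using linear[of k] above[of k] by linarith
qed

locale time_varying_tracking =
  fixes f :: "(real^'n::finite) \<times> real \<Rightarrow> real"
    and Df :: "(real^'n) \<times> real \<Rightarrow> ((real^'n) \<times> real) \<Rightarrow>\<^sub>L real"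
    and D2f :: "(real^'n) \<times> real \<Rightarrow> ((real^'n) \<times> real) \<Rightarrow>\<^sub>L ((real^'n) \<times> real) \<Rightarrow>\<^sub>L real"
    and D3f :: "(real^'n) \<times> real \<Rightarrow> ((real^'n) \<times> real) \<Rightarrow>\<^sub>L ((real^'n) \<times> real) \<Rightarrow>\<^sub>L ((real^'n) \<times> real) \<Rightarrow>\<^sub>L real"
    and m Cxx Cxt Cxxt Cxtt Cxxx \<alpha> :: real
    and cubic :: bool
  assumes C3: "C3_on (UNIV \<times> {0..}) f Df D2f D3f"
    and m_pos: "m > 0"
    and strong_conv: "\<And>x t v. t \<ge> 0 \<Longrightarrow> v \<bullet> (hessx D2f x t *v v) \<ge> m * (norm v)^2"
    and consts_pos: "Cxx > 0" "Cxt > 0" "Cxxt > 0" "Cxtt > 0" "Cxxx > 0"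
    and bnd_xx: "\<And>x t. t \<ge> 0 \<Longrightarrow> specnorm (hessx D2f x t) \<le> Cxx"
    and bnd_xt: "\<And>x t. t \<ge> 0 \<Longrightarrow> norm (gradxt D2f x t) \<le> Cxt"
    and bnd_xxt: "\<And>x t. t \<ge> 0 \<Longrightarrow> specnorm (hessxt D3f x t) \<le> Cxxt"
    and bnd_xtt: "\<And>x t. t \<ge> 0 \<Longrightarrow> norm (gradxtt D3f x t) \<le> Cxtt"
    and bnd_xxx: "\<And>x t i. t \<ge> 0 \<Longrightarrow> specnorm (hessxxx D3f x t i) \<le> Cxxx"
    and alpha_pos: "\<alpha> > 0"
begin

abbreviation step_dir :: "real^'n \<Rightarrow> real \<Rightarrow> real^'n" where
  "step_dir x t \<equiv> xdot Df D2f \<alpha> x t"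

abbreviation step_phi :: "real^'n \<Rightarrow> real \<Rightarrow> real \<Rightarrow> real" where
  "step_phi x t \<equiv>
     phi cubic \<alpha> (acoef Cxx Cxt (step_dir x t)) (bcoef Cxxx Cxxt Cxtt (step_dir x t)) (Vf Df x t)"

definition gradx_line :: "real^'n \<Rightarrow> real \<Rightarrow> real^'n \<Rightarrow> real \<Rightarrow> real^'n" where
  "gradx_line x t v r = gradx Df (x + r *\<^sub>R v) (t + r)"

definition gradx_line' :: "real^'n \<Rightarrow> real \<Rightarrow> real^'n \<Rightarrow> real \<Rightarrow> real^'n" where
  "gradx_line' x t v r = (\<chi> i. D2f (x + r *\<^sub>R v, t + r) (v, 1) (ex i))"

definition gradx_line'' :: "real^'n \<Rightarrow> real \<Rightarrow> real^'n \<Rightarrow> real \<Rightarrow> real^'n" where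
  "gradx_line'' x t v r = (\<chi> i. D3f (x + r *\<^sub>R v, t + r) (v, 1) (v, 1) (ex i))"

lemma
  assumes "t \<ge> 0" "r \<ge> 0"
  shows has_vector_derivative_gradx_line:
      "(gradx_line x t v has_vector_derivative gradx_line' x t v r) (at r within {0..})"
    and has_vector_derivative_gradx_line':
      "(gradx_line' x t v has_vector_derivative gradx_line'' x t v r) (at r within {0..})"
proof -
  have d2: "\<And>p. p \<in> UNIV \<times> {0..} \<Longrightarrow> (Df has_derivative D2f p) (at p within UNIV \<times> {0..})"
   and d3: "\<And>p. p \<in> UNIV \<times> {0..} \<Longrightarrow> (D2f has_derivative D3f p) (at p within UNIV \<times> {0..})"
    using C3 unfolding C3_on_def by auto
  have line: "\<And>s. s \<in> {0..} \<Longrightarrow> (x + s *\<^sub>R v, t + s) \<in> UNIV \<times> {0..}"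
    using assms by auto
  show "(gradx_line x t v has_vector_derivative gradx_line' x t v r) (at r within {0..})"
    unfolding gradx_line_def gradx_line'_def gradx_def
    by (rule vec_along_line_has_vector_derivative[OF has_derivative_blinfun_apply_left[OF d2] line])
      (use assms in auto)
  show "(gradx_line' x t v has_vector_derivative gradx_line'' x t v r) (at r within {0..})"
    unfolding gradx_line'_def gradx_line''_def
    by (rule vec_along_line_has_vector_derivative[where c' = "\<lambda>i p h. D3f p h (v, 1) (ex i)",
          OF has_derivative_blinfun_apply_left[OF has_derivative_blinfun_apply_left[OF d3]] line])
      (use assms in auto)
qed

lemma gradx_line'_eq:
  assumes "t + r \<ge> 0"
  shows "gradx_line' x t v r = hessx D2f (x + r *\<^sub>R v) (t + r) *v v + gradxt D2f (x + r *\<^sub>R v) (t + r)"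
  unfolding gradx_line'_def
  by (rule D2f_along_direction_eq) (use D2f_symmetric[OF C3] assms in auto)

lemma gradx_line''_eq:
  assumes "t + r \<ge> 0"
  shows "gradx_line'' x t v r = (\<Sum>l\<in>UNIV. v$l *\<^sub>R (hessxxx D3f (x + r *\<^sub>R v) (t + r) l *v v))
    + 2 *\<^sub>R (hessxt D3f (x + r *\<^sub>R v) (t + r) *v v) + gradxtt D3f (x + r *\<^sub>R v) (t + r)"
  unfolding gradx_line''_def
  by (rule D3f_along_direction_eq) (use D3f_symmetric_right[OF C3] D3f_symmetric_left[OF C3] assms in auto)


lemma acoef_nonneg: "acoef Cxx Cxt v \<ge> 0"
  unfolding acoef_def using consts_pos by simp

lemma bcoef_nonneg: "bcoef Cxxx Cxxt Cxtt v \<ge> 0"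
  unfolding bcoef_def using consts_pos norm1_nonneg[of v] by simp

lemma norm_gradx_line'_le:
  assumes "t + r \<ge> 0"
  shows "norm (gradx_line' x t v r) \<le> acoef Cxx Cxt v"
proof -
  let ?x = "x + r *\<^sub>R v" and ?t = "t + r"
  have "norm (gradx_line' x t v r) \<le> norm (hessx D2f ?x ?t *v v) + norm (gradxt D2f ?x ?t)"
    unfolding gradx_line'_eq[OF assms] by (rule norm_triangle_ineq)
  also have "\<dots> \<le> Cxx * norm v + Cxt"
    using norm_matrix_vector_le_specnorm[of "hessx D2f ?x ?t" v] bnd_xx[OF assms] bnd_xt[OF assms]
    by (smt (verit) mult_right_mono norm_ge_zero)
  finally show ?thesis
    unfolding acoef_def .
qed

lemma norm_gradx_line''_le:
  assumes "t + r \<ge> 0"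
  shows "norm (gradx_line'' x t v r) \<le> bcoef Cxxx Cxxt Cxtt v"
proof -
  let ?x = "x + r *\<^sub>R v" and ?t = "t + r"
  have "norm (\<Sum>l\<in>UNIV. v$l *\<^sub>R (hessxxx D3f ?x ?t l *v v)) \<le> (\<Sum>l\<in>UNIV. \<bar>v$l\<bar> * (Cxxx * norm v))"
  proof (rule order_trans[OF norm_sum sum_mono])
    fix l
    have "norm (hessxxx D3f ?x ?t l *v v) \<le> Cxxx * norm v"
      using norm_matrix_vector_le_specnorm[of "hessxxx D3f ?x ?t l" v] bnd_xxx[OF assms, of ?x l]
      by (smt (verit) mult_right_mono norm_ge_zero)
    then show "norm (v$l *\<^sub>R (hessxxx D3f ?x ?t l *v v)) \<le> \<bar>v$l\<bar> * (Cxxx * norm v)"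
      by (simp add: mult_left_mono)
  qed
  also have "\<dots> = Cxxx * norm1 v * norm v"
    unfolding norm1_def by (simp add: algebra_simps sum_distrib_left)
  finally have "norm (\<Sum>l\<in>UNIV. v$l *\<^sub>R (hessxxx D3f ?x ?t l *v v)) \<le> Cxxx * norm1 v * norm v" .
  moreover have "norm (hessxt D3f ?x ?t *v v) \<le> Cxxt * norm v"
    using norm_matrix_vector_le_specnorm[of "hessxt D3f ?x ?t" v] bnd_xxt[OF assms, of ?x]
    by (smt (verit) mult_right_mono norm_ge_zero)
  then have "norm (2 *\<^sub>R (hessxt D3f ?x ?t *v v)) \<le> 2 * (Cxxt * norm v)"
    by simp
  moreover have "norm (gradxtt D3f ?x ?t) \<le> Cxtt"
    using bnd_xtt[OF assms] .
  moreover have "norm (a + b + c) \<le> norm a + norm b + norm c" for a b c :: "real^'n"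
    by (metis add_right_mono norm_triangle_ineq order_trans)
  ultimately show ?thesis
    unfolding gradx_line''_eq[OF assms] bcoef_def by (smt (verit, best) distrib_right)
qed

text \<open>The step direction is chosen so that the gradient initially decays like exp (-\<alpha> r).\<close>

lemma gradx_line'_step_dir:
  assumes "t \<ge> 0"
  shows "gradx_line' x t (step_dir x t) 0 = - (\<alpha> *\<^sub>R gradx Df x t)"
proof -
  let ?H = "hessx D2f x t" and ?z = "\<alpha> *\<^sub>R gradx Df x t + gradxt D2f x t"
  have "?H *v step_dir x t = - ?z"
    using matrix_vector_mult_matrix_inv_pos_def[OF m_pos strong_conv[where x = x, OF assms], of ?z]
    by (simp add: xdot_def linear_neg[OF matrix_vector_mul_linear])
  then show ?thesis
    using gradx_line'_eq[of t 0] assms by simp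
qed

lemma norm_step_dir_le:
  assumes "t \<ge> 0"
  shows "m * norm (step_dir x t) \<le> \<alpha> * sqrt (2 * Vf Df x t) + Cxt"
proof -
  let ?z = "\<alpha> *\<^sub>R gradx Df x t + gradxt D2f x t"
  have "m * norm (step_dir x t) \<le> norm ?z"
    using norm_matrix_inv_pos_def_le[OF m_pos strong_conv[where x = x, OF assms]] by (simp add: xdot_def)
  also have "\<dots> \<le> \<alpha> * norm (gradx Df x t) + Cxt"
    using norm_triangle_ineq[of "\<alpha> *\<^sub>R gradx Df x t" "gradxt D2f x t"] bnd_xt[OF assms, of x] alpha_pos
    by simp
  also have "norm (gradx Df x t) = sqrt (2 * Vf Df x t)"
    unfolding Vf_def by simp
  finally show ?thesis .
qed


lemma gradx_line_estimates:
  assumes t: "t \<ge> 0" and r: "r \<ge> 0"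
  shows "norm (gradx_line' x t v r - gradx_line' x t v 0) \<le> bcoef Cxxx Cxxt Cxtt v * r"
    and "norm (gradx_line x t v r - gradx_line x t v 0) \<le> acoef Cxx Cxt v * r"
    and "norm (gradx_line x t v r - gradx_line x t v 0 - r *\<^sub>R gradx_line' x t v 0)
           \<le> bcoef Cxxx Cxxt Cxtt v * r^2 / 2"
proof -
  let ?a = "acoef Cxx Cxt v" and ?b = "bcoef Cxxx Cxxt Cxtt v"
  have sub: "q \<in> {0..r} \<Longrightarrow> (F has_vector_derivative F') (at q within {0..})
      \<Longrightarrow> (F has_vector_derivative F') (at q within {0..r})" for q F F'
    by (rule has_vector_derivative_within_subset) auto
  have deriv': "(gradx_line' x t v has_vector_derivative gradx_line'' x t v q) (at q within {0..r})"
    and deriv: "(gradx_line x t v has_vector_derivative gradx_line' x t v q) (at q within {0..r})"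
    if "q \<in> {0..r}" for q
    using that by (intro sub has_vector_derivative_gradx_line' has_vector_derivative_gradx_line t; simp)+
  have E1: "norm (gradx_line' x t v q - gradx_line' x t v 0) \<le> ?b * q" if "q \<ge> 0" for q
    using norm_diff_le_of_vector_derivative_bound[of 0 q "gradx_line' x t v" "gradx_line'' x t v" "\<lambda>q. ?b * q" "\<lambda>_. ?b"]
      has_vector_derivative_within_subset[OF has_vector_derivative_gradx_line'[OF t]]
      norm_gradx_line''_le t that
    by (force intro!: derivative_eq_intros)
  show "norm (gradx_line' x t v r - gradx_line' x t v 0) \<le> ?b * r"
    using E1[OF r] .
  show "norm (gradx_line x t v r - gradx_line x t v 0) \<le> ?a * r"
    using norm_diff_le_of_vector_derivative_bound[of 0 r "gradx_line x t v" "gradx_line' x t v" "\<lambda>q. ?a * q" "\<lambda>_. ?a"]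
      deriv norm_gradx_line'_le t r
    by (force intro!: derivative_eq_intros)
  have "norm ((gradx_line x t v r - r *\<^sub>R gradx_line' x t v 0) - (gradx_line x t v 0 - 0 *\<^sub>R gradx_line' x t v 0))
      \<le> ?b * r^2 / 2 - ?b * 0^2 / 2"
  proof (rule norm_diff_le_of_vector_derivative_bound[where F' = "\<lambda>q. gradx_line' x t v q - gradx_line' x t v 0"
        and \<beta>' = "\<lambda>q. ?b * q"])
    fix q assume q: "q \<in> {0..r}"
    show "((\<lambda>q. gradx_line x t v q - q *\<^sub>R gradx_line' x t v 0) has_vector_derivative
        gradx_line' x t v q - gradx_line' x t v 0) (at q within {0..r})"
      using deriv[OF q] by (auto intro!: derivative_eq_intros)
    show "((\<lambda>q. ?b * q^2 / 2) has_real_derivative ?b * q) (at q within {0..r})"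
      by (auto intro!: derivative_eq_intros)
    show "norm (gradx_line' x t v q - gradx_line' x t v 0) \<le> ?b * q"
      using E1 q by auto
  qed (use r in auto)
  then show "norm (gradx_line x t v r - gradx_line x t v 0 - r *\<^sub>R gradx_line' x t v 0) \<le> ?b * r^2 / 2"
    by (simp add: algebra_simps)
qed

lemma Vf_line_has_derivative:
  assumes "t \<ge> 0" "r \<ge> 0"
  shows "((\<lambda>r. Vf Df (x + r *\<^sub>R v) (t + r)) has_real_derivative
           gradx_line x t v r \<bullet> gradx_line' x t v r) (at r within {0..})"
proof -
  have "((\<lambda>r. gradx_line x t v r \<bullet> gradx_line x t v r) has_vector_derivative
      gradx_line x t v r \<bullet> gradx_line' x t v r + gradx_line' x t v r \<bullet> gradx_line x t v r) (at r within {0..})"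
    using bounded_bilinear.has_vector_derivative[OF bounded_bilinear_inner
        has_vector_derivative_gradx_line[OF assms] has_vector_derivative_gradx_line[OF assms]] .
  then have "((\<lambda>r. gradx_line x t v r \<bullet> gradx_line x t v r) has_real_derivative
      2 * (gradx_line x t v r \<bullet> gradx_line' x t v r)) (at r within {0..})"
    by (simp add: has_real_derivative_iff_has_vector_derivative inner_commute)
  from DERIV_cmult[OF this, of "1/2"]
  show ?thesis
    by (simp add: Vf_def gradx_line_def power2_norm_eq_inner)
qed


lemma gradx_line_inner_le_step_phi:
  assumes t: "t \<ge> 0" and r: "r \<ge> 0"
  shows "gradx_line x t (step_dir x t) r \<bullet> gradx_line' x t (step_dir x t) r \<le> step_phi x t r"
proof -
  let ?v = "step_dir x t"
  let ?g = "gradx_line x t ?v" and ?G = "gradx_line' x t ?v"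
  let ?a = "acoef Cxx Cxt ?v" and ?b = "bcoef Cxxx Cxxt Cxtt ?v"
  note E = gradx_line_estimates[OF t r, of x ?v]
  have G0: "?G 0 = - (\<alpha> *\<^sub>R ?g 0)"
    using gradx_line'_step_dir[OF t] by (simp add: gradx_line_def)
  have V: "Vf Df x t = 1/2 * (norm (?g 0))^2" and sqrt_V: "sqrt (2 * Vf Df x t) = norm (?g 0)"
    unfolding Vf_def gradx_line_def by simp_all
  show ?thesis
  proof (cases cubic)
    case True
    have "((1 - \<alpha> * r) *\<^sub>R ?g 0 + (?g r - ?g 0 - r *\<^sub>R ?G 0)) \<bullet> (- (\<alpha> *\<^sub>R ?g 0) + (?G r - ?G 0))
        \<le> 1/2 * ?b^2 * r^3 + 3/2 * \<alpha> * norm (?g 0) * ?b * r^2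
           + (norm (?g 0) * ?b + \<alpha>^2 * (norm (?g 0))^2) * r - \<alpha> * (norm (?g 0))^2"
      by (rule inner_perturbed_descent_le_cubic[OF E(3) E(1) r alpha_pos bcoef_nonneg])
    then show ?thesis
      using True G0 unfolding phi_def sqrt_V V by (simp add: algebra_simps)
  next
    case False
    have "(?g 0 + (?g r - ?g 0)) \<bullet> ?G r
        \<le> 1/2 * ?a * ?b * r^2 + (?a^2 + ?b * norm (?g 0)) * r - \<alpha> * (norm (?g 0))^2"
      by (rule inner_perturbed_descent_le_quadratic[OF _ E(2) E(1) norm_gradx_line'_le r
            acoef_nonneg bcoef_nonneg]) (use G0 t r in simp_all)
    then show ?thesis
      using False unfolding phi_def sqrt_V V by (simp add: algebra_simps)
  qed
qed

lemma step_phi_mono: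
  assumes "0 \<le> r" "r \<le> r'"
  shows "step_phi x t r \<le> step_phi x t r'"
  by (rule phi_mono[OF assms acoef_nonneg bcoef_nonneg _ alpha_pos]) (simp add: Vf_def)

lemma Vf_step_increment_le:
  assumes "t \<ge> 0" "0 \<le> p" "p \<le> q"
  shows "Vf Df (x + q *\<^sub>R step_dir x t) (t + q) - Vf Df (x + p *\<^sub>R step_dir x t) (t + p)
           \<le> (q - p) * step_phi x t q"
  using increment_le_of_derivative_le_mono[OF Vf_line_has_derivative[OF assms(1)]
      gradx_line_inner_le_step_phi[OF assms(1)] step_phi_mono assms(2,3)]
  by simp


lemma Vf_step_le:
  assumes "t \<ge> 0" "\<tau> \<ge> 0" "step_phi x t \<tau> = 0"
  shows "Vf Df (x + \<tau> *\<^sub>R step_dir x t) (t + \<tau>) \<le> Vf Df x t"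
  using Vf_step_increment_le[OF assms(1) order_refl assms(2), of x] assms(3) by simp

text \<open>While V stays in [\<epsilon>, Vm], the coefficients a_k and b_k are bounded (strong convexity bounds
  the step direction), so \<phi>_k is uniformly negative on a fixed initial interval [0, s]: the step
  reaches beyond s and V drops by at least \<alpha> \<epsilon> s.\<close>

lemma uniform_step_decrease:
  assumes \<epsilon>: "\<epsilon> > 0" "\<epsilon> \<le> Vm"
  obtains \<delta> where "\<delta> > 0"
    "\<And>x t \<tau>. t \<ge> 0 \<Longrightarrow> \<epsilon> \<le> Vf Df x t \<Longrightarrow> Vf Df x t \<le> Vm \<Longrightarrow> \<tau> > 0 \<Longrightarrow> step_phi x t \<tau> = 0 \<Longrightarrow>
       Vf Df (x + \<tau> *\<^sub>R step_dir x t) (t + \<tau>) \<le> Vf Df x t - \<delta>"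
proof -
  define N where "N = (\<alpha> * sqrt (2 * Vm) + Cxt) / m"
  define A where "A = Cxx * N + Cxt"
  define B where "B = (Cxxx * (real CARD('n) * N) + 2 * Cxxt) * N + Cxtt"
  define K where "K = A^2 + B * sqrt (2*Vm) + 1/2 * A * B
    + (sqrt (2*Vm) * B + 2 * \<alpha>^2 * Vm) + 3/2 * \<alpha> * sqrt (2*Vm) * B + 1/2 * B^2 + 1"
  define s where "s = min 1 (\<alpha> * \<epsilon> / K)"
  have N: "N \<ge> 0"
    unfolding N_def using \<epsilon> alpha_pos consts_pos m_pos by simp
  then have K: "K > 0"
    unfolding K_def A_def B_def using \<epsilon> alpha_pos consts_pos by (simp add: add_nonneg_pos)
  have s: "0 < s" "s \<le> 1" "s * K \<le> \<alpha> * \<epsilon>"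
    unfolding s_def using \<epsilon> alpha_pos K by (auto simp: min_def field_simps)
  show ?thesis
  proof (rule that)
    show "\<alpha> * \<epsilon> * s > 0"
      using \<epsilon> alpha_pos s by simp
    fix x t \<tau> assume t: "t \<ge> 0" and V: "\<epsilon> \<le> Vf Df x t" "Vf Df x t \<le> Vm"
      and \<tau>: "\<tau> > 0" "step_phi x t \<tau> = 0"
    let ?v = "step_dir x t"
    have "sqrt (2 * Vf Df x t) \<le> sqrt (2 * Vm)"
      using V by simp
    then have "\<alpha> * sqrt (2 * Vf Df x t) \<le> \<alpha> * sqrt (2 * Vm)"
      using alpha_pos by simp
    then have "m * norm ?v \<le> \<alpha> * sqrt (2 * Vm) + Cxt"
      using norm_step_dir_le[OF t, of x] by linarith
    then have v: "norm ?v \<le> N"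
      unfolding N_def using m_pos by (simp add: field_simps)
    have "acoef Cxx Cxt ?v \<le> A"
      unfolding acoef_def A_def using v consts_pos by (simp add: mult_left_mono)
    moreover have "bcoef Cxxx Cxxt Cxtt ?v \<le> B"
      unfolding bcoef_def B_def
      using v N norm1_nonneg[of ?v] consts_pos order_trans[OF norm1_le_card_mult_norm mult_left_mono[OF v]]
      by (intro add_mono mult_mono) auto
    ultimately have "step_phi x t s + 2 * \<alpha> * Vf Df x t \<le> s * (K - 1)"
      unfolding K_def using phi_le_linear_bound[OF _ s(2) acoef_nonneg _ bcoef_nonneg _ _ V(2) alpha_pos]
        s(1) \<epsilon> V(1) by simp
    moreover have "\<alpha> * \<epsilon> \<le> \<alpha> * Vf Df x t"
      using V(1) alpha_pos by simp
    ultimately have phi_s: "step_phi x t s \<le> - (\<alpha> * \<epsilon>)"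
      using s by (simp add: algebra_simps)
    have "s < \<tau>"
      using step_phi_mono[of \<tau> s x t] \<tau> phi_s \<epsilon> alpha_pos
      by (smt (verit) mult_pos_pos)
    then have "Vf Df (x + \<tau> *\<^sub>R ?v) (t + \<tau>) - Vf Df (x + s *\<^sub>R ?v) (t + s) \<le> 0"
      and "Vf Df (x + s *\<^sub>R ?v) (t + s) - Vf Df x t \<le> s * step_phi x t s"
      using Vf_step_increment_le[OF t, of s \<tau> x] Vf_step_increment_le[OF t, of 0 s x] s \<tau> by auto
    moreover have "s * step_phi x t s \<le> - (\<alpha> * \<epsilon> * s)"
      using mult_left_mono[OF phi_s, of s] s by (simp add: algebra_simps)
    ultimately show "Vf Df (x + \<tau> *\<^sub>R ?v) (t + \<tau>) \<le> Vf Df x t - \<alpha> * \<epsilon> * s"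
      by linarith
  qed
qed

end

theorem corollary1:
  fixes f :: "(real^'n::finite) \<times> real \<Rightarrow> real"
    and Df :: "(real^'n) \<times> real \<Rightarrow> ((real^'n) \<times> real) \<Rightarrow>\<^sub>L real"
    and D2f :: "(real^'n) \<times> real \<Rightarrow> ((real^'n) \<times> real) \<Rightarrow>\<^sub>L ((real^'n) \<times> real) \<Rightarrow>\<^sub>L real"
    and D3f :: "(real^'n) \<times> real \<Rightarrow> ((real^'n) \<times> real) \<Rightarrow>\<^sub>L ((real^'n) \<times> real) \<Rightarrow>\<^sub>L ((real^'n) \<times> real) \<Rightarrow>\<^sub>L real"
    and m Cxx Cxt Cxxt Cxtt Cxxx \<alpha> :: real
    and x0 :: "real^'n"
    and cubic :: bool
    and xs :: "nat \<Rightarrow> real^'n"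
    and ts :: "nat \<Rightarrow> real"
  assumes C3: "C3_on (UNIV \<times> {0..}) f Df D2f D3f"
    and m_pos: "m > 0"
    and strong_conv: "\<And>x t v. t \<ge> 0 \<Longrightarrow> v \<bullet> (hessx D2f x t *v v) \<ge> m * (norm v)^2"
    and consts_pos: "Cxx > 0" "Cxt > 0" "Cxxt > 0" "Cxtt > 0" "Cxxx > 0"
    and bnd_xx: "\<And>x t. t \<ge> 0 \<Longrightarrow> specnorm (hessx D2f x t) \<le> Cxx"
    and bnd_xt: "\<And>x t. t \<ge> 0 \<Longrightarrow> norm (gradxt D2f x t) \<le> Cxt"
    and bnd_xxt: "\<And>x t. t \<ge> 0 \<Longrightarrow> specnorm (hessxt D3f x t) \<le> Cxxt"
    and bnd_xtt: "\<And>x t. t \<ge> 0 \<Longrightarrow> norm (gradxtt D3f x t) \<le> Cxtt"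
    and bnd_xxx: "\<And>x t i. t \<ge> 0 \<Longrightarrow> specnorm (hessxxx D3f x t i) \<le> Cxxx"
    and alpha_pos: "\<alpha> > 0"
    and t0: "ts 0 = 0"
    and x_0: "xs 0 = x0"
    and t_step: "\<And>k. ts k < ts (Suc k)"
    and t_root: "\<And>k. phi cubic \<alpha> (acoef Cxx Cxt (xdot Df D2f \<alpha> (xs k) (ts k)))
                        (bcoef Cxxx Cxxt Cxtt (xdot Df D2f \<alpha> (xs k) (ts k)))
                        (Vf Df (xs k) (ts k)) (ts (Suc k) - ts k) = 0"
    and t_least: "\<And>k s. ts k < s \<Longrightarrow> s < ts (Suc k) \<Longrightarrow>
                    phi cubic \<alpha> (acoef Cxx Cxt (xdot Df D2f \<alpha> (xs k) (ts k)))
                        (bcoef Cxxx Cxxt Cxtt (xdot Df D2f \<alpha> (xs k) (ts k)))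
                        (Vf Df (xs k) (ts k)) (s - ts k) \<noteq> 0"
    and x_step: "\<And>k. xs (Suc k) = xs k + (ts (Suc k) - ts k) *\<^sub>R xdot Df D2f \<alpha> (xs k) (ts k)"
    and V_pos: "\<And>k. Vf Df (xs k) (ts k) > 0"
  shows "\<forall>\<epsilon>>0. \<exists>k::nat. Vf Df (xs k) (ts k) < \<epsilon>"
proof (intro allI impI)
  interpret time_varying_tracking f Df D2f D3f m Cxx Cxt Cxxt Cxtt Cxxx \<alpha> cubic
    using assms by unfold_locales
  define V where "V k = Vf Df (xs k) (ts k)" for k
  have ts_nonneg: "ts k \<ge> 0" for k
    by (induction k) (simp add: t0, metis t_step less_imp_le order_trans)
  have V_next: "V (Suc k) = Vf Df (xs k + \<tau> *\<^sub>R step_dir (xs k) (ts k)) (ts k + \<tau>)"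
    if "\<tau> = ts (Suc k) - ts k" for k \<tau>
    using x_step[of k] that by (simp add: V_def)
  have V_nonincreasing: "V (Suc k) \<le> V k" for k
    using Vf_step_le[OF ts_nonneg _ t_root] t_step[of k] V_next by (simp add: V_def less_imp_le)
  then have V_le_V0: "V k \<le> V 0" for k
    by (induction k) (auto intro: order_trans)
  fix \<epsilon> :: real assume \<epsilon>: "\<epsilon> > 0"
  show "\<exists>k. Vf Df (xs k) (ts k) < \<epsilon>"
  proof (cases "V 0 < \<epsilon>")
    case False
    then obtain \<delta> where \<delta>: "\<delta> > 0" and decrease: "\<And>x t \<tau>. t \<ge> 0 \<Longrightarrow> \<epsilon> \<le> Vf Df x t \<Longrightarrow> Vf Df x t \<le> V 0
        \<Longrightarrow> \<tau> > 0 \<Longrightarrow> step_phi x t \<tau> = 0 \<Longrightarrow> Vf Df (x + \<tau> *\<^sub>R step_dir x t) (t + \<tau>) \<le> Vf Df x t - \<delta>"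
      using uniform_step_decrease[OF \<epsilon>] by (metis not_le)
    have "V (Suc k) \<le> V k - \<delta>" if "\<epsilon> \<le> V k" for k
      using decrease[OF ts_nonneg _ _ _ t_root] that V_le_V0[of k] t_step[of k] V_next
      by (simp add: V_def)
    then have "\<exists>k. V k < \<epsilon>"
      by (rule exists_below_of_uniform_decrease[OF _ \<delta>])
    then show ?thesis
      unfolding V_def .
  qed (auto simp: V_def)
qed

end
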